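(* Let $\alpha>-1$ and $s\in\mathbb N$. Then for every integer $n\ge s$, $$J_n^{(\alpha,-s)}(u)=\frac{(n-s)!}{n!}\,(1+u)^s\,\widehat P_{n-s}^{(\alpha,s)}(u),$$ and consequently, for $n\ge s$, $$J_n^{(\alpha,-s)}(u)=\frac{(-1)^s2^s}{(-\alpha-n)_s}\,A_{n-s}^{(\alpha,s)}\,P_n^{(\alpha,-s)}(u).$$
   Context: $(a)_k=a(a+1)\cdots(a+k-1)$ is the Pochhammer symbol. For real parameters $\alpha,\beta$ and $n\in\mathbb N_0$, the Jacobi polynomial is $P_n^{(\alpha,\beta)}(u)=\sum_{k=0}^n\frac{(\alpha+k+1)_{n-k}\,(-n)_k\,(n+\alpha+\beta+1)_k}{n!\,k!}\left(\frac{1-u}{2}\right)^k$ (i.e. $\frac{(\alpha+1)_n}{n!}{}_2F_1(-n,n+\alpha+\beta+1;\alpha+1;\frac{1-u}{2})$, defined for all real parameters). Whenever $(n+\alpha+\beta+1)_n\neq0$ put $A_n^{(\alpha,\beta)}=\frac{2^n}{(n+\alpha+\beta+1)_n}$ and $\widehat P_n^{(\alpha,\beta)}=A_n^{(\alpha,\beta)}P_n^{(\alpha,\beta)}$. For $s\in\mathbb N$ and $\alpha>-1-s$, define polynomials $J_n^{(\alpha,-s)}$, $n\in\mathbb N_0$, by $J_n^{(\alpha,-s)}(u)=\frac{(u+1)^n}{n!}$ for $0\le n\le s-1$ and $J_n^{(\alpha,-s)}(u)=\int_{-1}^{u}\frac{(u-w)^{s-1}}{(s-1)!}\,\widehat P_{n-s}^{(\alpha+s,0)}(w)\,\mathrm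 dw$ for $n\ge s$. *)

theory Defs
  imports "HOL-Analysis.Analysis"
begin

definition jacobiP :: "nat \<Rightarrow> real \<Rightarrow> real \<Rightarrow> real \<Rightarrow> real" where
  "jacobiP n a b u =
     (\<Sum>k=0..n. pochhammer (a + real k + 1) (n - k) * pochhammer (- real n) k
        * pochhammer (real n + a + b + 1) k / (fact n * fact k) * ((1 - u) / 2) ^ k)"

text \<open>Normalising constant A_n^(a,b) = 2^n / (n+a+b+1)_n (only used where the denominator is nonzero).\<close>
definition jacobiA :: "nat \<Rightarrow> real \<Rightarrow> real \<Rightarrow> real" where
  "jacobiA n a b = 2 ^ n / pochhammer (real n + a + b + 1) n"

definition jacobiPhat :: "nat \<Rightarrow> real \<Rightarrow> real \<Rightarrow> real \<Rightarrow> real" where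
  "jacobiPhat n a b u = jacobiA n a b * jacobiP n a b u"

definition int_from_m1 :: "(real \<Rightarrow> real) \<Rightarrow> real \<Rightarrow> real" where
  "int_from_m1 f u = (if -1 \<le> u then integral {-1..u} f else - integral {u..-1} f)"

definition J :: "real \<Rightarrow> nat \<Rightarrow> nat \<Rightarrow> real \<Rightarrow> real" where
  "J a s n u =
     (if n < s then (u + 1) ^ n / fact n
      else int_from_m1 (\<lambda>w. (u - w) ^ (s - 1) / fact (s - 1) * jacobiPhat (n - s) (a + real s) 0 w) u)"

end

theory Submission
  imports Defs
begin

text \<open>
  \<open>J\<close> is the \<open>s\<close>-fold iterated integral of \<open>Phat_{n-s}^(\<alpha>+s,0)\<close> from \<open>-1\<close>, so by Taylor's
  formula with integral remainder it equals every function whose \<open>s\<close>-th derivative is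
  \<open>Phat_{n-s}^(\<alpha>+s,0)\<close> and whose lower derivatives vanish at \<open>-1\<close>; both right-hand sides are
  such functions. Writing \<open>P_m^(a,b)\<close> as a polynomial in \<open>t = (1-u)/2\<close> and comparing
  coefficients gives the derivative formula \<open>P_{m+1}^(a,b)' = (m+a+b+2)/2 P_m^(a+1,b+1)\<close> and the
  contiguous relation \<open>b P_m^(a,b) + (1+u) P_m^(a,b)' = (m+b) P_m^(a+1,b-1)\<close>. The latter says that
  differentiating \<open>(1+u)^k P_m^(a,k)\<close> lowers \<open>k\<close> and raises \<open>a\<close> by one, and at \<open>u = -1\<close> it
  yields \<open>P_N^(a,-r)(-1) = 0\<close> for \<open>1 \<le> r \<le> N\<close>.
\<close>

definition jacobi_coeff :: "nat \<Rightarrow> real \<Rightarrow> real \<Rightarrow> nat \<Rightarrow> real" where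
  "jacobi_coeff n a b k = pochhammer (a + real k + 1) (n - k) * pochhammer (- real n) k
     * pochhammer (real n + a + b + 1) k / (fact n * fact k)"

lemma jacobiP_eq_sum_coeff: "jacobiP n a b u = (\<Sum>k=0..n. jacobi_coeff n a b k * ((1 - u) / 2) ^ k)"
  unfolding jacobiP_def jacobi_coeff_def by simp

lemma jacobi_coeff_eq_0: "n < k \<Longrightarrow> jacobi_coeff n a b k = 0"
  unfolding jacobi_coeff_def by (simp add: pochhammer_eq_0_iff)

lemma sum_atLeast0_atMost_shift_vanishing:
  fixes f :: "nat \<Rightarrow> 'a::comm_monoid_add"
  assumes "f 0 = 0" and "f (Suc n) = 0"
  shows "(\<Sum>k=0..n. f (Suc k)) = (\<Sum>k=0..n. f k)"
  using sum.atLeast0_atMost_Suc_shift[of f n] sum.atLeast0_atMost_Suc[of f n] assms by simp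

lemma jacobiP_has_real_derivative:
  "(jacobiP n a b has_real_derivative
     - (\<Sum>k=0..n. real (Suc k) * jacobi_coeff n a b (Suc k) * ((1 - x) / 2) ^ k) / 2) (at x)"
proof -
  let ?f = "\<lambda>k. real k * jacobi_coeff n a b k * ((1 - x) / 2) ^ (k - 1)"
  have "(jacobiP n a b has_real_derivative
      (\<Sum>k=0..n. jacobi_coeff n a b k * (real k * ((1 - x) / 2) ^ (k - 1) * (- 1 / 2)))) (at x)"
    unfolding jacobiP_eq_sum_coeff [abs_def]
    by (auto intro!: derivative_eq_intros DERIV_sum simp: algebra_simps)
  also have "(\<Sum>k=0..n. jacobi_coeff n a b k * (real k * ((1 - x) / 2) ^ (k - 1) * (- 1 / 2)))
      = - (\<Sum>k=0..n. ?f k) / 2"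
    by (simp add: sum_negf [symmetric] sum_divide_distrib mult_ac)
  also have "(\<Sum>k=0..n. ?f k) = (\<Sum>k=0..n. ?f (Suc k))"
    by (rule sum_atLeast0_atMost_shift_vanishing [symmetric]) (simp_all add: jacobi_coeff_eq_0)
  finally show ?thesis by simp
qed

lemma jacobi_coeff_contiguous:
  "(b + real k) * jacobi_coeff m a b k - real (Suc k) * jacobi_coeff m a b (Suc k)
     = (real m + b) * jacobi_coeff m (a + 1) (b - 1) k"
proof (cases m k rule: linorder_cases)
  case less
  then show ?thesis by (simp add: jacobi_coeff_eq_0)
next
  case equal
  then show ?thesis by (simp add: jacobi_coeff_def pochhammer_eq_0_iff add_ac)
next
  case greater
  txt \<open>All three coefficients are multiples of \<open>K\<close>; what remains is the identity
    \<open>(b + k)(a + k + 1) + (m - k)(m + a + b + k + 1) = (m + b)(m + a + 1)\<close>.\<close>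
  then obtain d where "m = Suc (k + d)" using less_iff_Suc_add by blast
  then have m: "m - k = Suc d" "m - Suc k = d" by auto
  define R where "R = pochhammer (a + real k + 2) d"
  define U where "U = pochhammer (- real m) k"
  define V where "V = pochhammer (real m + a + b + 1) k"
  define K where "K = R * U * V / (fact m * fact k)"
  have "jacobi_coeff m a b k = (a + real k + 1) * K"
    unfolding jacobi_coeff_def K_def U_def V_def m R_def pochhammer_rec by (simp add: add_ac)
  moreover have "real (Suc k) * jacobi_coeff m a b (Suc k)
      = (real k - real m) * (real m + a + b + 1 + real k) * K"
  proof -
    have R_eq: "pochhammer (a + real (Suc k) + 1) (m - Suc k) = R"
      unfolding m R_def by (simp add: add_ac)
    have U_eq: "pochhammer (- real m) (Suc k) = U * (real k - real m)"
      unfolding U_def pochhammer_Suc by simp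
    have V_eq: "pochhammer (real m + a + b + 1) (Suc k) = V * (real m + a + b + 1 + real k)"
      unfolding V_def pochhammer_Suc by simp
    have "fact (Suc k) = real (Suc k) * (fact k :: real)" by simp
    then show ?thesis
      unfolding jacobi_coeff_def K_def R_eq U_eq V_eq by (simp del: of_nat_Suc)
  qed
  moreover have "jacobi_coeff m (a + 1) (b - 1) k = (a + real m + 1) * K"
    unfolding jacobi_coeff_def K_def U_def V_def m R_def pochhammer_Suc
    using \<open>m = Suc (k + d)\<close> by (simp add: algebra_simps)
  ultimately show ?thesis by (simp add: algebra_simps)
qed

lemma jacobi_coeff_Suc_Suc:
  "real (Suc k) * jacobi_coeff (Suc m) a b (Suc k)
     = - (real m + a + b + 2) * jacobi_coeff m (a + 1) (b + 1) k"
proof (cases "k \<le> m")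
  case False
  then show ?thesis by (simp add: jacobi_coeff_eq_0)
next
  case True
  define R where "R = pochhammer (a + real k + 2) (m - k)"
  define U where "U = pochhammer (- real m) k"
  define V where "V = pochhammer (real m + a + b + 3) k"
  have R_eq: "pochhammer (a + real (Suc k) + 1) (Suc m - Suc k) = R"
    unfolding R_def by (simp add: add_ac)
  have U_eq: "pochhammer (- real (Suc m)) (Suc k) = - real (Suc m) * U"
    unfolding U_def pochhammer_rec by simp
  have V_eq: "pochhammer (real (Suc m) + a + b + 1) (Suc k) = (real m + a + b + 2) * V"
    unfolding V_def pochhammer_rec by (simp add: add_ac)
  have "fact (Suc m) * fact (Suc k) = real (Suc m) * real (Suc k) * (fact m * fact k :: real)"
    by simp
  then have "real (Suc k) * jacobi_coeff (Suc m) a b (Suc k)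
      = - (real m + a + b + 2) * (R * U * V / (fact m * fact k))"
    unfolding jacobi_coeff_def R_eq U_eq V_eq by (simp del: of_nat_Suc) (simp add: field_simps)
  moreover have "jacobi_coeff m (a + 1) (b + 1) k = R * U * V / (fact m * fact k)"
    unfolding jacobi_coeff_def R_def U_def V_def by (simp add: add_ac)
  ultimately show ?thesis by simp
qed

lemma jacobiP_Suc_has_real_derivative:
  "(jacobiP (Suc m) a b has_real_derivative (real m + a + b + 2) / 2 * jacobiP m (a + 1) (b + 1) x)
     (at x)"
proof -
  define t where "t = (1 - x) / 2"
  have "(\<Sum>k=0..Suc m. real (Suc k) * jacobi_coeff (Suc m) a b (Suc k) * t ^ k)
      = (\<Sum>k=0..m. real (Suc k) * jacobi_coeff (Suc m) a b (Suc k) * t ^ k)"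
    by (simp add: jacobi_coeff_eq_0)
  also have "\<dots> = - (real m + a + b + 2) * jacobiP m (a + 1) (b + 1) x"
    unfolding jacobi_coeff_Suc_Suc jacobiP_eq_sum_coeff t_def
    by (simp add: sum_distrib_left mult.assoc)
  finally have sum_eq: "(\<Sum>k=0..Suc m. real (Suc k) * jacobi_coeff (Suc m) a b (Suc k) * t ^ k)
      = - (real m + a + b + 2) * jacobiP m (a + 1) (b + 1) x" .
  show ?thesis
    using jacobiP_has_real_derivative [of "Suc m" a b x, folded t_def]
    unfolding sum_eq by (simp add: algebra_simps)
qed

lemma jacobiP_contiguous:
  assumes "(jacobiP m a b has_real_derivative D) (at u)"
  shows "b * jacobiP m a b u + (1 + u) * D = (real m + b) * jacobiP m (a + 1) (b - 1) u"
proof -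
  define t where "t = (1 - u) / 2"
  define c where "c = jacobi_coeff m a b"
  define g where "g k = real (Suc k) * c (Suc k)" for k
  have D_eq: "D = - (\<Sum>k=0..m. g k * t ^ k) / 2"
    unfolding g_def c_def t_def using assms jacobiP_has_real_derivative by (rule DERIV_unique)
  have u_eq: "1 + u = 2 * (1 - t)"
    unfolding t_def by (simp add: field_simps)
  have "(1 + u) * D = (t - 1) * (\<Sum>k=0..m. g k * t ^ k)"
    unfolding D_eq u_eq by (simp add: field_simps)
  also have "\<dots> = (\<Sum>k=0..m. g k * t ^ Suc k) - (\<Sum>k=0..m. g k * t ^ k)"
    by (simp add: sum_distrib_left sum_subtractf [symmetric] algebra_simps)
  also have "(\<Sum>k=0..m. g k * t ^ Suc k) = (\<Sum>k=0..m. real k * c k * t ^ k)"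
    using sum_atLeast0_atMost_shift_vanishing [of "\<lambda>k. real k * c k * t ^ k" m]
    by (simp add: g_def c_def jacobi_coeff_eq_0)
  finally have "b * jacobiP m a b u + (1 + u) * D
      = (\<Sum>k=0..m. ((b + real k) * c k - g k) * t ^ k)"
    unfolding jacobiP_eq_sum_coeff t_def c_def
    by (simp add: sum_distrib_left sum_subtractf [symmetric] sum.distrib [symmetric] algebra_simps)
  also have "\<dots> = (real m + b) * jacobiP m (a + 1) (b - 1) u"
    unfolding g_def c_def jacobi_coeff_contiguous jacobiP_eq_sum_coeff t_def
    by (simp add: sum_distrib_left mult.assoc)
  finally show ?thesis .
qed

lemma jacobiP_minus_one_eq_0:
  assumes "1 \<le> r" and "r \<le> n"
  shows "jacobiP n a (- real r) (-1) = 0"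
  using assms
proof (induction r arbitrary: a)
  case 0
  then show ?case by simp
next
  case (Suc r)
  have step: "b * jacobiP n (a - 1) b (-1) = (real n + b) * jacobiP n a (b - 1) (-1)" for b
    using jacobiP_contiguous [OF jacobiP_has_real_derivative, of b n "a - 1" "-1"] by simp
  show ?case
  proof (cases "r = 0")
    case True
    then show ?thesis using step [of 0] Suc.prems by simp
  next
    case False
    then have "jacobiP n (a - 1) (- real r) (-1) = 0" using Suc by simp
    then have "jacobiP n a (- real r - 1) (-1) = 0" using step [of "- real r"] Suc.prems by simp
    moreover have "- real (Suc r) = - real r - 1" by simp
    ultimately show ?thesis by metis
  qed
qed

lemma power_times_jacobiP_has_real_derivative:
  assumes "1 \<le> k"
  shows "((\<lambda>u. (1 + u) ^ k * jacobiP m a (real k) u) has_real_derivative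
     (real m + real k) * (1 + u) ^ (k - 1) * jacobiP m (a + 1) (real k - 1) u) (at u)"
proof -
  obtain D where D: "(jacobiP m a (real k) has_real_derivative D) (at u)"
    using jacobiP_has_real_derivative by blast
  have "((\<lambda>u. (1 + u) ^ k * jacobiP m a (real k) u) has_real_derivative
      (1 + u) ^ (k - 1) * (real k * jacobiP m a (real k) u + (1 + u) * D)) (at u)"
  proof (rule DERIV_cong [OF DERIV_mult' [OF _ D]])
    show "((\<lambda>u. (1 + u) ^ k) has_real_derivative real k * (1 + u) ^ (k - 1)) (at u)"
      by (auto intro!: derivative_eq_intros)
    show "(1 + u) ^ k * D + real k * (1 + u) ^ (k - 1) * jacobiP m a (real k) u
        = (1 + u) ^ (k - 1) * (real k * jacobiP m a (real k) u + (1 + u) * D)"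
      using assms by (cases k) (simp_all add: algebra_simps)
  qed
  then show ?thesis
    unfolding jacobiP_contiguous [OF D] by (simp add: mult_ac)
qed

lemma Taylor_int_from_m1:
  fixes D :: "nat \<Rightarrow> real \<Rightarrow> real"
  assumes "0 < s"
    and deriv: "\<And>j x. j < s \<Longrightarrow> (D j has_real_derivative D (Suc j) x) (at x)"
    and zero: "\<And>j. j < s \<Longrightarrow> D j (-1) = 0"
  shows "D 0 u = int_from_m1 (\<lambda>w. (u - w) ^ (s - 1) / fact (s - 1) * D s w) u"
proof (cases "-1 \<le> u")
  case True
  have "D 0 u = (\<Sum>i<s. ((u - -1) ^ i / fact i) *\<^sub>R D i (-1))
      + integral {-1..u} (\<lambda>x. ((u - x) ^ (s - 1) / fact (s - 1)) *\<^sub>R D s x)"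
    by (rule Taylor_integral [where f = "D 0" and Df = D])
      (use assms True in \<open>auto intro!: has_field_derivative_at_within deriv
         simp: has_real_derivative_iff_has_vector_derivative [symmetric]\<close>)
  then show ?thesis
    using True zero unfolding int_from_m1_def by simp
next
  case False
  text \<open>Taylor's formula needs \<open>-1 \<le> u\<close>; reflecting \<open>x \<mapsto> -x\<close> moves the expansion to \<open>[1, -u]\<close>.\<close>
  define f where "f w = (u - w) ^ (s - 1) / fact (s - 1) * D s w" for w
  define E where "E j x = (-1) ^ j * D j (-x)" for j x
  have E_deriv: "(E j has_real_derivative E (Suc j) x) (at x)" if "j < s" for j x
  proof -
    have "((\<lambda>x. D j (-x)) has_real_derivative D (Suc j) (-x) * (-1)) (at x)"
      by (rule DERIV_chain2 [OF deriv [OF that]]) (auto intro!: derivative_eq_intros)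
    from DERIV_cmult [OF this, of "(-1) ^ j"] show ?thesis
      unfolding E_def [abs_def] by (simp add: algebra_simps)
  qed
  have kernel: "((-u - x) ^ (s - 1) / fact (s - 1)) *\<^sub>R E s x = - f (-x)" for x
  proof -
    obtain r where s: "s = Suc r" using \<open>0 < s\<close> gr0_implies_Suc by blast
    have "(-u - x) ^ r = (-1) ^ r * (u + x) ^ r"
      using power_minus [of "u + x" r] by simp
    then show ?thesis
      unfolding E_def f_def s by simp
  qed
  have "E 0 (-u) = (\<Sum>i<s. ((-u - 1) ^ i / fact i) *\<^sub>R E i 1)
      + integral {1..-u} (\<lambda>x. ((-u - x) ^ (s - 1) / fact (s - 1)) *\<^sub>R E s x)"
    by (rule Taylor_integral [where f = "E 0" and Df = E])
      (use assms False in \<open>auto intro!: has_field_derivative_at_within E_deriv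
         simp: has_real_derivative_iff_has_vector_derivative [symmetric]\<close>)
  also have "(\<Sum>i<s. ((-u - 1) ^ i / fact i) *\<^sub>R E i 1) = 0"
    using zero by (simp add: E_def)
  also have "integral {1..-u} (\<lambda>x. ((-u - x) ^ (s - 1) / fact (s - 1)) *\<^sub>R E s x)
      = - integral {u..-1} f"
    using Henstock_Kurzweil_Integration.integral_reflect_real [of "-1" u f]
    unfolding kernel by (simp add: integral_neg)
  finally show ?thesis
    using False unfolding int_from_m1_def E_def f_def by simp
qed

lemma J_eq_of_derivative_chain:
  fixes D :: "nat \<Rightarrow> real \<Rightarrow> real"
  assumes "1 \<le> s" and "s \<le> n"
    and "\<And>j x. j < s \<Longrightarrow> (D j has_real_derivative D (Suc j) x) (at x)"
    and "\<And>j. j < s \<Longrightarrow> D j (-1) = 0"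
    and "\<And>w. D s w = jacobiPhat (n - s) (a + real s) 0 w"
  shows "J a s n u = D 0 u"
  using Taylor_int_from_m1 [of s D u] assms unfolding J_def by simp

lemma jacobiA_shift: "jacobiA m (a + real s) 0 = jacobiA m a (real s)"
  unfolding jacobiA_def by (simp add: add_ac)

lemma J_eq_power_times_jacobiPhat:
  assumes "1 \<le> s"
  shows "J a s (m + s) u = fact m / fact (m + s) * (1 + u) ^ s * jacobiPhat m a (real s) u"
proof -
  define c where "c = fact m / fact (m + s) * jacobiA m a (real s)"
  define D where "D j u = c * (fact (m + s) / fact (m + s - j)) * ((1 + u) ^ (s - j)
      * jacobiP m (a + real j) (real (s - j)) u)" for j u
  have "J a s (m + s) u = D 0 u"
  proof (rule J_eq_of_derivative_chain)
    fix j x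
    assume "j < s"
    have "m + s - j = Suc (m + s - Suc j)" using \<open>j < s\<close> by simp
    then have "fact (m + s - j) = real (m + s - j) * (fact (m + s - Suc j) :: real)"
      by (metis fact_Suc)
    moreover have "real m + real (s - j) = real (m + s - j)" "real (s - j) - 1 = real (s - Suc j)"
      using \<open>j < s\<close> by auto
    ultimately have "c * (fact (m + s) / fact (m + s - j)) * ((real m + real (s - j))
        * (1 + x) ^ (s - j - 1) * jacobiP m (a + real j + 1) (real (s - j) - 1) x) = D (Suc j) x"
      using \<open>j < s\<close> unfolding D_def by (simp add: add_ac del: of_nat_diff)
    then show "(D j has_real_derivative D (Suc j) x) (at x)"
      unfolding D_def
      using power_times_jacobiP_has_real_derivative [of "s - j" m "a + real j" x] \<open>j < s\<close>
      by (intro DERIV_cong [OF DERIV_cmult]) simp_all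
  next
    show "D s w = jacobiPhat (m + s - s) (a + real s) 0 w" for w
      unfolding D_def c_def jacobiPhat_def jacobiA_shift by simp
  qed (use assms in \<open>auto simp: D_def\<close>)
  then show ?thesis
    unfolding D_def c_def jacobiPhat_def by simp
qed

lemma pochhammer_minus_shift:
  "pochhammer (- a - real n) s = (-1) ^ s * pochhammer (real n + a - real s + 1) s"
  using pochhammer_minus [of "a + real n" s] by (simp add: algebra_simps)

lemma J_eq_jacobiP:
  assumes "1 \<le> s" and "s \<le> n" and "pochhammer (- a - real n) s \<noteq> 0"
  shows "J a s n u = (-1) ^ s * 2 ^ s / pochhammer (- a - real n) s
                       * jacobiA (n - s) a (real s) * jacobiP n a (- real s) u"
proof -
  define Q where "Q = pochhammer (real n + a - real s + 1) s"
  have "pochhammer (- a - real n) s = (-1) ^ s * Q"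
    unfolding Q_def by (rule pochhammer_minus_shift)
  then have "Q \<noteq> 0" and c_eq: "(-1) ^ s * 2 ^ s / pochhammer (- a - real n) s = 2 ^ s / Q"
    using assms(3) by auto
  define c where "c = 2 ^ s / Q * jacobiA (n - s) a (real s)"
  define D where "D j u = c * pochhammer (real n + a - real s + 1) j / 2 ^ j
      * jacobiP (n - j) (a + real j) (real j - real s) u" for j u
  have "J a s n u = D 0 u"
  proof (rule J_eq_of_derivative_chain)
    fix j x
    assume "j < s"
    then have "n - j = Suc (n - Suc j)" using assms(2) by simp
    have shift: "real (n - Suc j) + (a + real j) + (real j - real s) + 2
        = real n + a - real s + 1 + real j"
      "a + real j + 1 = a + real (Suc j)" "real j - real s + 1 = real (Suc j) - real s"
      using \<open>j < s\<close> assms(2) by auto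
    have "c * pochhammer (real n + a - real s + 1) j / 2 ^ j
        * ((real (n - Suc j) + (a + real j) + (real j - real s) + 2) / 2
          * jacobiP (n - Suc j) (a + real j + 1) (real j - real s + 1) x) = D (Suc j) x"
      unfolding D_def pochhammer_Suc shift by (simp add: ac_simps)
    then show "(D j has_real_derivative D (Suc j) x) (at x)"
      unfolding D_def \<open>n - j = Suc (n - Suc j)\<close>
      using jacobiP_Suc_has_real_derivative [of "n - Suc j" "a + real j" "real j - real s" x]
      by (intro DERIV_cong [OF DERIV_cmult])
  next
    fix j
    assume "j < s"
    then have arg: "real j - real s = - real (s - j)" by simp
    have "jacobiP (n - j) (a + real j) (- real (s - j)) (-1) = 0"
      using \<open>j < s\<close> assms(2) by (intro jacobiP_minus_one_eq_0) auto
    then show "D j (-1) = 0"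
      unfolding D_def arg by simp
  next
    show "D s w = jacobiPhat (n - s) (a + real s) 0 w" for w
      unfolding D_def c_def jacobiPhat_def jacobiA_shift Q_def [symmetric] using \<open>Q \<noteq> 0\<close> by simp
  qed (use assms in auto)
  then show ?thesis
    unfolding D_def c_def c_eq by simp
qed

theorem mainTheorem1:
  fixes a :: real and s n :: nat and u :: real
  assumes "a > -1" and "s \<ge> 1" and "n \<ge> s"
  shows "J a s n u = fact (n - s) / fact n * (1 + u) ^ s * jacobiPhat (n - s) a (real s) u
       \<and> J a s n u = (-1) ^ s * 2 ^ s / pochhammer (- a - real n) s
                       * jacobiA (n - s) a (real s) * jacobiP n a (- real s) u"
proof
  show "J a s n u = fact (n - s) / fact n * (1 + u) ^ s * jacobiPhat (n - s) a (real s) u"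
    using J_eq_power_times_jacobiPhat [of s a "n - s" u] assms by simp
next
  have "pochhammer (real n + a - real s + 1) s > 0"
    using assms by (intro pochhammer_pos) simp
  then have "pochhammer (- a - real n) s \<noteq> 0"
    unfolding pochhammer_minus_shift by simp
  then show "J a s n u = (-1) ^ s * 2 ^ s / pochhammer (- a - real n) s
                       * jacobiA (n - s) a (real s) * jacobiP n a (- real s) u"
    using assms by (intro J_eq_jacobiP) auto
qed

end
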